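(* For all integers $m\ge 1$ and $v\ge 1$, the Gardner–Fisher sum satisfies $$S_{m,v}=\frac{1}{(2v-1)!}\sum_{n=0}^{v-1}\left(\frac{\pi}{m}\right)^{2n}s(v,n)\,\Gamma(2v-2n)\,\zeta(2v-2n)\left(1-\frac{1}{m^{2v-2n}}\right).$$
   Context: The Gardner–Fisher sum is $S_{m,v}=\left(\frac{\pi}{2m}\right)^{2v}\sum_{k=1}^{m-1}\cos^{-2v}\!\left(\frac{k\pi}{2m}\right)=\left(\frac{\pi}{2m}\right)^{2v}\sum_{k=1}^{m-1}\sin^{-2v}\!\left(\frac{k\pi}{2m}\right)$ (empty sum $=0$). For integers $v\ge1$ and $0\le n\le v-1$, $s(v,n)$ denotes the $n$-th elementary symmetric polynomial evaluated at the $v-1$ numbers $1^2,2^2,\dots,(v-1)^2$, i.e. $s(v,n)=\sum_{1\le i_1<\dots<i_n\le v-1} i_1^2i_2^2\cdots i_n^2$, with $s(v,0)=1$. $\zeta$ is the Riemann zeta function. *)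

theory Defs
  imports "HOL-Analysis.Analysis"
begin

text \<open>Riemann zeta function, needed only at real arguments s > 1, where it is
  the convergent Dirichlet series sum over k >= 1 of k powr (-s).\<close>
definition riemann_zeta :: "real \<Rightarrow> real" where
  "riemann_zeta s = (\<Sum>k. 1 / (real (Suc k)) powr s)"

definition gardner_fisher :: "nat \<Rightarrow> nat \<Rightarrow> real" where
  "gardner_fisher m v =
     (pi / (2 * real m)) ^ (2 * v) *
     (\<Sum>k = 1..m - 1. 1 / (cos (real k * pi / (2 * real m))) ^ (2 * v))"

definition esym_sq :: "nat \<Rightarrow> nat \<Rightarrow> real" where
  "esym_sq v n = (\<Sum>I \<in> {I. I \<subseteq> {1..v - 1} \<and> card I = n}. \<Prod>i\<in>I. real i ^ 2)"

end

theory Submission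
  imports Defs "HOL-Complex_Analysis.Complex_Analysis"
begin

text \<open>
  Write F_v(w) = sin(pi w)^(-2v). Differentiating the reflection formula
  Gamma(w) Gamma(1-w) = pi / sin(pi w) twice gives pi^2 F_1(w) = psi_1(w) + psi_1(1-w), so each
  even derivative of F_1 is a sum psi_j(w) + psi_j(1-w) of polygamma values. On the other hand
  F_v'' = pi^2 (2v(2v+1) F_(v+1) - 4v^2 F_v), and unwinding this recurrence writes
  (2v-1)! pi^(2v) F_v as the sum over n of s(v,n) (2 pi)^(2n) (psi_(2v-2n-1)(w) + psi_(2v-2n-1)(1-w)):
  the elementary symmetric functions of the squares are exactly the coefficients the recurrence
  produces. Since cos(k pi/2m) = sin((m-k) pi/2m), the Gardner--Fisher sum consists of the values
  F_v(k/2m), and at these points the polygamma values are given by the multiplication formula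
  sum_(r=1..N) psi_j(r/N) = (-1)^(j+1) j! N^(j+1) zeta(j+1): the points r/2m with r <> m, 2m
  carry exactly the integers n >= 1 not divisible by m, whence the factor zeta(p) (1 - m^(-p)).
\<close>

section \<open>Reflection formulas for digamma and trigamma\<close>

lemma sin_pi_times_nonzero:
  fixes w :: complex
  assumes "w \<notin> \<int>"
  shows "sin (of_real pi * w) \<noteq> 0"
proof
  assume "sin (of_real pi * w) = 0"
  then obtain n :: int where "of_real pi * w = of_real (n * pi)" by (auto simp: sin_eq_0)
  hence "w = of_int n" by (simp add: field_simps)
  with assms show False by auto
qed

lemma one_minus_not_Ints:
  fixes w :: "'a :: ring_1"
  assumes "w \<notin> \<int>"
  shows "1 - w \<notin> \<int>"
  using assms Ints_diff[of 1 "1 - w"] by auto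

lemma open_Compl_Ints: "open (- \<int> :: complex set)"
  by (simp add: open_Compl)

lemma Compl_Ints_Int_nonpos_Ints: "- \<int> \<inter> \<int>\<^sub>\<le>\<^sub>0 = {}"
  using nonpos_Ints_subset_Ints by blast

lemma has_field_derivative_eq_0_if_locally_const:
  fixes f :: "complex \<Rightarrow> complex"
  assumes "(f has_field_derivative D) (at w)" "open S" "w \<in> S" "\<And>x. x \<in> S \<Longrightarrow> f x = c"
  shows "D = 0"
proof -
  have "((\<lambda>x. c) has_field_derivative D) (at w)"
    using has_field_derivative_transform_within_open[OF assms(1,2,3)] assms(4) by auto
  thus ?thesis using DERIV_unique DERIV_const by blast
qed

lemma Digamma_reflection_complex:
  fixes w :: complex
  assumes w: "w \<notin> \<int>"
  shows "Digamma w - Digamma (1 - w) = - of_real pi * cos (of_real pi * w) / sin (of_real pi * w)"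
proof -
  have nz: "w \<notin> \<int>\<^sub>\<le>\<^sub>0" "1 - w \<notin> \<int>\<^sub>\<le>\<^sub>0" "sin (of_real pi * w) \<noteq> 0"
    using w one_minus_not_Ints[OF w] nonpos_Ints_subset_Ints sin_pi_times_nonzero by blast+
  let ?c = "(Digamma w - Digamma (1 - w)) * sin (of_real pi * w) + of_real pi * cos (of_real pi * w)"
  have "((\<lambda>w. Gamma w * Gamma (1 - w) * sin (of_real pi * w))
      has_field_derivative Gamma w * Gamma (1 - w) * ?c) (at w)"
    using nz by (auto intro!: derivative_eq_intros simp: algebra_simps)
  moreover have "Gamma x * Gamma (1 - x) * sin (of_real pi * x) = of_real pi" if "x \<in> - \<int>" for x :: complex
    using Gamma_reflection_complex[of x] sin_pi_times_nonzero[of x] that by simp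
  ultimately have "Gamma w * Gamma (1 - w) * ?c = 0"
    using has_field_derivative_eq_0_if_locally_const open_Compl_Ints w by blast
  moreover have "Gamma w * Gamma (1 - w) \<noteq> 0" using nz by (simp add: Gamma_eq_zero_iff)
  ultimately have "?c = 0" by simp
  thus ?thesis using nz by (simp add: field_simps)
qed

lemma Polygamma_1_reflection_complex:
  fixes w :: complex
  assumes w: "w \<notin> \<int>"
  shows "Polygamma 1 w + Polygamma 1 (1 - w) = of_real pi ^ 2 / sin (of_real pi * w) ^ 2"
proof -
  have nz: "w \<notin> \<int>\<^sub>\<le>\<^sub>0" "1 - w \<notin> \<int>\<^sub>\<le>\<^sub>0" "sin (of_real pi * w) \<noteq> 0"
    using w one_minus_not_Ints[OF w] nonpos_Ints_subset_Ints sin_pi_times_nonzero by blast+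
  let ?D = "Polygamma 1 w + Polygamma 1 (1 - w) - of_real pi ^ 2 / sin (of_real pi * w) ^ 2"
  have "((\<lambda>w. Digamma w - Digamma (1 - w) + of_real pi * cos (of_real pi * w) / sin (of_real pi * w))
      has_field_derivative ?D) (at w)"
    using nz by (auto intro!: derivative_eq_intros simp: field_simps power2_eq_square)
      (metis sin_cos_squared_add3 distrib_left mult_1_right)
  moreover have "Digamma x - Digamma (1 - x) + of_real pi * cos (of_real pi * x) / sin (of_real pi * x) = 0"
    if "x \<in> - \<int>" for x :: complex
    using Digamma_reflection_complex[of x] that by simp
  ultimately have "?D = 0"
    using has_field_derivative_eq_0_if_locally_const open_Compl_Ints w by blast
  thus ?thesis by simp
qed

section \<open>Even powers of the cosecant and their derivatives\<close>

definition csc_pi_pow :: "nat \<Rightarrow> complex \<Rightarrow> complex" where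
  "csc_pi_pow v w = inverse (sin (of_real pi * w) ^ (2 * v))"

lemma holomorphic_on_csc_pi_pow: "csc_pi_pow v holomorphic_on - \<int>"
  unfolding csc_pi_pow_def by (auto intro!: holomorphic_intros dest: sin_pi_times_nonzero)

lemma csc_pi_pow_Suc: "csc_pi_pow (Suc v) w = csc_pi_pow v w / sin (of_real pi * w) ^ 2"
  by (simp add: csc_pi_pow_def field_simps power2_eq_square)

lemma has_field_derivative_csc_pi_pow:
  assumes "w \<notin> \<int>"
  shows "(csc_pi_pow v has_field_derivative
     - of_nat (2 * v) * of_real pi * cot (of_real pi * w) * csc_pi_pow v w) (at w)"
proof -
  have "sin (of_real pi * w) \<noteq> 0" using sin_pi_times_nonzero[OF assms] .
  thus ?thesis unfolding csc_pi_pow_def[abs_def] cot_def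
    by (cases "v = 0") (auto intro!: derivative_eq_intros simp: power_diff field_simps)
qed

lemma has_field_derivative_csc_pi_pow_deriv:
  assumes "w \<notin> \<int>"
  shows "((\<lambda>x. - of_nat (2 * v) * of_real pi * cot (of_real pi * x) * csc_pi_pow v x)
     has_field_derivative
     of_real pi ^ 2 * (of_nat (2 * v * (2 * v + 1)) * csc_pi_pow (Suc v) w - of_nat ((2 * v)^2) * csc_pi_pow v w)) (at w)"
proof -
  let ?t = "cot (of_real pi * w)" and ?i = "inverse (sin (of_real pi * w) ^ 2)" and ?F = "csc_pi_pow v w"
  have s: "sin (of_real pi * w) \<noteq> 0" using sin_pi_times_nonzero[OF assms] .
  have cot: "((\<lambda>x. cot (of_real pi * x)) has_field_derivative - ?i * of_real pi) (at w)"
    by (rule DERIV_chain2[where g = "\<lambda>x. of_real pi * x", OF DERIV_cot[OF s]])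
      (auto intro!: derivative_eq_intros)
  have i: "?i = ?t ^ 2 + 1"
    using s by (simp add: cot_def power_divide cos_squared_eq field_simps)
  have "((\<lambda>x. - of_nat (2 * v) * of_real pi * cot (of_real pi * x) * csc_pi_pow v x)
     has_field_derivative - of_nat (2 * v) * of_real pi * (- ?i * of_real pi * ?F
       + ?t * (- of_nat (2 * v) * of_real pi * ?t * ?F))) (at w)"
    by (rule DERIV_cong[OF DERIV_mult[OF DERIV_cmult[OF cot] has_field_derivative_csc_pi_pow[OF assms]]])
      (simp add: algebra_simps)
  moreover have "- of_nat (2 * v) * of_real pi * (- ?i * of_real pi * ?F
       + ?t * (- of_nat (2 * v) * of_real pi * ?t * ?F)) =
     of_real pi ^ 2 * (of_nat (2 * v * (2 * v + 1)) * (?F * ?i) - of_nat ((2 * v)^2) * ?F)"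
    unfolding i by (simp add: algebra_simps power2_eq_square)
  ultimately show ?thesis
    by (simp add: csc_pi_pow_Suc divide_inverse)
qed

lemma deriv_deriv_csc_pi_pow:
  assumes w: "w \<notin> \<int>"
  shows "deriv (deriv (csc_pi_pow v)) w =
     of_real pi ^ 2 * (of_nat (2 * v * (2 * v + 1)) * csc_pi_pow (Suc v) w - of_nat ((2 * v)^2) * csc_pi_pow v w)"
proof -
  let ?G = "\<lambda>x. - of_nat (2 * v) * of_real pi * cot (of_real pi * x) * csc_pi_pow v x"
  have "eventually (\<lambda>x. x \<in> - \<int>) (nhds w)"
    using w open_Compl_Ints eventually_nhds_in_open by blast
  hence "eventually (\<lambda>x. deriv (csc_pi_pow v) x = ?G x) (nhds w)"
    by eventually_elim (simp add: has_field_derivative_csc_pi_pow[THEN DERIV_imp_deriv])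
  hence "deriv (deriv (csc_pi_pow v)) w = deriv ?G w" by (intro deriv_cong_ev) auto
  also have "\<dots> = of_real pi ^ 2 * (of_nat (2 * v * (2 * v + 1)) * csc_pi_pow (Suc v) w
      - of_nat ((2 * v)^2) * csc_pi_pow v w)"
    by (rule DERIV_imp_deriv has_field_derivative_csc_pi_pow_deriv w)+
  finally show ?thesis .
qed

lemma higher_deriv_csc_pi_pow_recurrence:
  assumes w: "w \<notin> \<int>"
  shows "(deriv ^^ (2 * k + 2)) (csc_pi_pow v) w =
     of_real pi ^ 2 * of_nat (2 * v * (2 * v + 1)) * (deriv ^^ (2 * k)) (csc_pi_pow (Suc v)) w
     - of_real pi ^ 2 * of_nat ((2 * v)^2) * (deriv ^^ (2 * k)) (csc_pi_pow v) w"
proof -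
  have w': "w \<in> - \<int>" using w by simp
  have "(deriv ^^ (2 * k + 2)) (csc_pi_pow v) w = (deriv ^^ (2 * k)) ((deriv ^^ 2) (csc_pi_pow v)) w"
    by (subst funpow_add) simp
  also have "\<dots> = (deriv ^^ (2 * k)) (\<lambda>x. of_real pi ^ 2 * of_nat (2 * v * (2 * v + 1)) * csc_pi_pow (Suc v) x
     - of_real pi ^ 2 * of_nat ((2 * v)^2) * csc_pi_pow v x) w"
    by (rule higher_deriv_transform_within_open[OF _ _ open_Compl_Ints w'])
       (auto intro!: holomorphic_intros holomorphic_on_csc_pi_pow open_Compl_Ints
             simp: numeral_2_eq_2 deriv_deriv_csc_pi_pow algebra_simps)
  also have "\<dots> = of_real pi ^ 2 * of_nat (2 * v * (2 * v + 1)) * (deriv ^^ (2 * k)) (csc_pi_pow (Suc v)) w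
     - of_real pi ^ 2 * of_nat ((2 * v)^2) * (deriv ^^ (2 * k)) (csc_pi_pow v) w"
    by (subst higher_deriv_diff[OF _ _ open_Compl_Ints w'])
       (auto intro!: holomorphic_intros holomorphic_on_csc_pi_pow
             simp: higher_deriv_cmult[OF holomorphic_on_csc_pi_pow w' open_Compl_Ints])
  finally show ?thesis .
qed

lemma higher_deriv_csc_pi_pow_1:
  assumes w: "w \<notin> \<int>"
  shows "(deriv ^^ (2 * j)) (csc_pi_pow 1) w =
     (Polygamma (2 * j + 1) w + Polygamma (2 * j + 1) (1 - w)) / of_real pi ^ 2"
proof -
  have w': "w \<in> - \<int>" using w by simp
  have holP: "Polygamma 1 holomorphic_on - \<int>"
    by (rule holomorphic_on_Polygamma[OF Compl_Ints_Int_nonpos_Ints])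
  have refl: "(\<lambda>x. (-1) * x + 1) ` (- \<int>) \<subseteq> - \<int>"
    using one_minus_not_Ints by fastforce
  have "(\<lambda>x. (-1) * x + 1) holomorphic_on - \<int>" by (intro holomorphic_intros)
  hence holR: "(\<lambda>x. Polygamma 1 ((-1) * x + 1)) holomorphic_on - \<int>"
    using holomorphic_on_compose_gen[OF _ holP refl] unfolding o_def by blast
  have "(deriv ^^ (2 * j)) (csc_pi_pow 1) w =
      (deriv ^^ (2 * j)) (\<lambda>x. (Polygamma 1 x + Polygamma 1 ((-1) * x + 1)) / of_real pi ^ 2) w"
  proof (rule higher_deriv_transform_within_open[OF holomorphic_on_csc_pi_pow _ open_Compl_Ints w'])
    show "(\<lambda>x. (Polygamma 1 x + Polygamma 1 ((-1) * x + 1)) / of_real pi ^ 2) holomorphic_on - \<int>"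
      by (intro holomorphic_intros holP holR) simp
    fix x :: complex assume "x \<in> - \<int>"
    thus "csc_pi_pow 1 x = (Polygamma 1 x + Polygamma 1 ((-1) * x + 1)) / of_real pi ^ 2"
      using Polygamma_1_reflection_complex[of x] by (simp add: csc_pi_pow_def field_simps power2_eq_square)
  qed
  also have "\<dots> = ((deriv ^^ (2 * j)) (Polygamma 1) w
      + (deriv ^^ (2 * j)) (\<lambda>x. Polygamma 1 ((-1) * x + 1)) w) / of_real pi ^ 2"
    using higher_deriv_cmult[OF holomorphic_on_add[OF holP holR] w' open_Compl_Ints, of _ "inverse (of_real pi ^ 2)"]
      higher_deriv_add[OF holP holR open_Compl_Ints w']
    by (simp add: divide_inverse mult.commute)
  finally have "(deriv ^^ (2 * j)) (csc_pi_pow 1) w = ((deriv ^^ (2 * j)) (Polygamma 1) w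
      + (deriv ^^ (2 * j)) (\<lambda>x. Polygamma 1 ((-1) * x + 1)) w) / of_real pi ^ 2" .
  moreover have "(deriv ^^ (2 * j)) (\<lambda>x. Polygamma 1 ((-1) * x + 1)) w =
      (deriv ^^ (2 * j)) (Polygamma 1) (1 - w)"
    using higher_deriv_compose_linear'[OF holP open_Compl_Ints open_Compl_Ints w', of "-1" 1] refl by force
  moreover have "w \<notin> \<int>\<^sub>\<le>\<^sub>0" "1 - w \<notin> \<int>\<^sub>\<le>\<^sub>0"
    using w one_minus_not_Ints[OF w] nonpos_Ints_subset_Ints by blast+
  ultimately show ?thesis
    using higher_deriv_Polygamma[of w "2 * j" 1] higher_deriv_Polygamma[of "1 - w" "2 * j" 1] by simp
qed

section \<open>Elementary symmetric functions of squares\<close>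

lemma sum_card_subsets_insert:
  assumes "finite A" "a \<notin> A"
  shows "(\<Sum>I\<in>{I. I \<subseteq> insert a A \<and> card I = Suc n}. g I) =
         (\<Sum>I\<in>{I. I \<subseteq> A \<and> card I = Suc n}. g I) + (\<Sum>I\<in>{I. I \<subseteq> A \<and> card I = n}. g (insert a I))"
proof -
  have fin: "finite {I. I \<subseteq> A \<and> card I = k}" for k
    using assms(1) by (rule finite_subset[rotated, OF finite_Pow_iff[THEN iffD2]]) auto
  have split: "{I. I \<subseteq> insert a A \<and> card I = Suc n} =
      {I. I \<subseteq> A \<and> card I = Suc n} \<union> insert a ` {I. I \<subseteq> A \<and> card I = n}"
  proof (intro equalityI subsetI)
    fix I assume I: "I \<in> {I. I \<subseteq> insert a A \<and> card I = Suc n}"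
    hence "finite I" using assms(1) finite_subset by auto
    with I show "I \<in> {I. I \<subseteq> A \<and> card I = Suc n} \<union> insert a ` {I. I \<subseteq> A \<and> card I = n}"
      by (cases "a \<in> I") (auto intro!: image_eqI[of _ _ "I - {a}"])
  next
    fix I assume "I \<in> {I. I \<subseteq> A \<and> card I = Suc n} \<union> insert a ` {I. I \<subseteq> A \<and> card I = n}"
    thus "I \<in> {I. I \<subseteq> insert a A \<and> card I = Suc n}"
      using assms finite_subset by (auto simp: card_insert_if)
  qed
  have inj: "inj_on (insert a) {I. I \<subseteq> A \<and> card I = n}"
    using assms(2) by (auto simp: inj_on_def insert_ident)
  have disj: "{I. I \<subseteq> A \<and> card I = Suc n} \<inter> insert a ` {I. I \<subseteq> A \<and> card I = n} = {}"
    using assms(2) by auto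
  show ?thesis
    unfolding split
    by (subst sum.union_disjoint) (use fin disj in \<open>auto simp: sum.reindex[OF inj]\<close>)
qed

lemma esym_sq_0 [simp]: "esym_sq v 0 = 1"
proof -
  have "{I. I \<subseteq> {1..v - 1} \<and> card I = 0} = {{}}"
  proof safe
    fix I x assume "I \<subseteq> {1..v - 1}" "card I = 0" "x \<in> I"
    thus "x \<in> {}" using finite_subset[of I "{1..v - 1}"] by auto
  qed auto
  thus ?thesis unfolding esym_sq_def by simp
qed

lemma esym_sq_eq_0: "v - 1 < n \<Longrightarrow> esym_sq v n = 0"
proof -
  assume n: "v - 1 < n"
  have E: "{I. I \<subseteq> {1..v - 1} \<and> card I = n} = {}"
  proof safe
    fix I assume "I \<subseteq> {1..v - 1}" "n = card I"
    thus "I \<in> {}" using n card_mono[of "{1..v - 1}" I] by simp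
  qed
  show ?thesis unfolding esym_sq_def E by simp
qed

lemma esym_sq_Suc:
  "esym_sq (Suc (Suc m)) (Suc n) = esym_sq (Suc m) (Suc n) + real (Suc m) ^ 2 * esym_sq (Suc m) n"
proof -
  have "{1..Suc m} = insert (Suc m) {1..m}" by auto
  hence "esym_sq (Suc (Suc m)) (Suc n) = esym_sq (Suc m) (Suc n) +
      (\<Sum>I\<in>{I. I \<subseteq> {1..m} \<and> card I = n}. \<Prod>i\<in>insert (Suc m) I. real i ^ 2)"
    unfolding esym_sq_def diff_Suc_1 by (simp only:) (rule sum_card_subsets_insert; simp)
  also have "(\<Sum>I\<in>{I. I \<subseteq> {1..m} \<and> card I = n}. \<Prod>i\<in>insert (Suc m) I. real i ^ 2)
      = real (Suc m) ^ 2 * esym_sq (Suc m) n"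
    unfolding esym_sq_def diff_Suc_1 sum_distrib_left
  proof (rule sum.cong)
    fix I assume "I \<in> {I. I \<subseteq> {1..m} \<and> card I = n}"
    hence "finite I" "Suc m \<notin> I" using finite_subset by auto
    thus "(\<Prod>i\<in>insert (Suc m) I. real i ^ 2) = real (Suc m) ^ 2 * (\<Prod>i\<in>I. real i ^ 2)"
      by simp
  qed simp
  finally show ?thesis .
qed

section \<open>Polygamma expansion of the even powers\<close>

lemma higher_deriv_csc_pi_pow_expansion:
  assumes w: "w \<notin> \<int>"
  shows "fact (2 * m + 1) * of_real pi ^ (2 * m) * (deriv ^^ (2 * k)) (csc_pi_pow (Suc m)) w =
     (\<Sum>n\<le>m. of_real (esym_sq (Suc m) n) * (4 * of_real pi ^ 2) ^ n *
        (deriv ^^ (2 * (k + m - n))) (csc_pi_pow 1) w)"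
proof (induction m arbitrary: k)
  case 0
  thus ?case by simp
next
  case (Suc m)
  define v where "v = Suc m"
  define q :: complex where "q = 4 * of_real pi ^ 2"
  define e where "e a b = complex_of_real (esym_sq a b)" for a b
  define X where "X a j = (deriv ^^ (2 * j)) (csc_pi_pow a) w" for a j
  define D where "D j = X 1 j" for j
  have IH: "fact (2 * m + 1) * of_real pi ^ (2 * m) * X v j = (\<Sum>n\<le>m. e v n * q ^ n * D (j + m - n))" for j
    using Suc.IH[of j] by (simp add: v_def q_def e_def X_def D_def)
  have rec: "X v (Suc k) = of_real pi ^ 2 * of_nat (2 * v * (2 * v + 1)) * X (Suc v) k
      - of_real pi ^ 2 * of_nat ((2 * v)^2) * X v k"
    using higher_deriv_csc_pi_pow_recurrence[OF w, of k v] by (simp add: X_def)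
  have "fact (2 * Suc m + 1) * of_real pi ^ (2 * Suc m) * X (Suc v) k =
     fact (2 * m + 1) * of_real pi ^ (2 * m) * (of_real pi ^ 2 * of_nat (2 * v * (2 * v + 1)) * X (Suc v) k)"
    by (simp add: v_def fact_Suc power_add power2_eq_square algebra_simps)
  also have "\<dots> = fact (2 * m + 1) * of_real pi ^ (2 * m) * X v (Suc k)
      + of_real pi ^ 2 * of_nat ((2 * v)^2) * (fact (2 * m + 1) * of_real pi ^ (2 * m) * X v k)"
    by (simp add: rec algebra_simps)
  also have "\<dots> = (\<Sum>n\<le>m. e v n * q ^ n * D (Suc k + m - n))
      + (\<Sum>n\<le>m. of_nat v ^ 2 * e v n * q ^ Suc n * D (k + m - n))"
    unfolding IH by (simp add: sum_distrib_left q_def algebra_simps)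
  also have "(\<Sum>n\<le>m. e v n * q ^ n * D (Suc k + m - n)) = (\<Sum>n\<le>Suc m. e v n * q ^ n * D (Suc k + m - n))"
    using esym_sq_eq_0[of v "Suc m"] by (simp add: e_def v_def)
  also have "\<dots> = e v 0 * D (Suc k + m) + (\<Sum>n\<le>m. e v (Suc n) * q ^ Suc n * D (k + m - n))"
    by (subst sum.atMost_Suc_shift) simp
  also have "e v 0 * D (Suc k + m) + (\<Sum>n\<le>m. e v (Suc n) * q ^ Suc n * D (k + m - n))
      + (\<Sum>n\<le>m. of_nat v ^ 2 * e v n * q ^ Suc n * D (k + m - n))
     = e (Suc v) 0 * D (k + Suc m) + (\<Sum>n\<le>m. e (Suc v) (Suc n) * q ^ Suc n * D (k + m - n))"
    by (simp add: e_def v_def esym_sq_Suc sum.distrib algebra_simps)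
  also have "\<dots> = (\<Sum>n\<le>Suc m. e (Suc v) n * q ^ n * D (k + Suc m - n))"
    by (subst sum.atMost_Suc_shift) simp
  finally show ?case by (simp add: v_def q_def e_def X_def D_def)
qed

lemma inverse_sin_pow_Polygamma_expansion:
  fixes x :: real
  assumes x: "0 < x" "x < 1"
  shows "fact (2 * r + 1) * pi ^ (2 * r + 2) / sin (pi * x) ^ (2 * r + 2) =
    (\<Sum>n\<le>r. esym_sq (Suc r) n * (2 * pi) ^ (2 * n) *
        (Polygamma (2 * (r - n) + 1) x + Polygamma (2 * (r - n) + 1) (1 - x)))"
proof -
  define w where "w = complex_of_real x"
  have "x \<notin> \<int>"
  proof
    assume "x \<in> \<int>"
    then obtain n where "x = of_int n" by (auto elim: Ints_cases)
    with x show False by auto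
  qed
  hence w: "w \<notin> \<int>" by (simp add: w_def)
  have pg: "Polygamma n (of_real x) = of_real (Polygamma n x)"
      "Polygamma n (1 - of_real x) = (of_real (Polygamma n (1 - x)) :: complex)" for n
    using Polygamma_of_real[of x n] Polygamma_of_real[of "1 - x" n] x by simp_all
  have scale: "of_real pi ^ 2 * (c * (4 * of_real pi ^ 2) ^ n * (P / of_real pi ^ 2)) =
      c * (2 * of_real pi) ^ (2 * n) * P" for c P :: complex and n
    by (simp add: power_mult power_mult_distrib)
  have "fact (2 * r + 1) * of_real pi ^ (2 * r + 2) * csc_pi_pow (Suc r) w =
      of_real pi ^ 2 * (fact (2 * r + 1) * of_real pi ^ (2 * r) * csc_pi_pow (Suc r) w)"
    by (simp add: power_add power2_eq_square mult_ac)
  also have "\<dots> = of_real pi ^ 2 * (\<Sum>n\<le>r. of_real (esym_sq (Suc r) n) * (4 * of_real pi ^ 2) ^ n *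
      ((Polygamma (2 * (r - n) + 1) w + Polygamma (2 * (r - n) + 1) (1 - w)) / of_real pi ^ 2))"
    using higher_deriv_csc_pi_pow_expansion[OF w, of r 0] unfolding higher_deriv_csc_pi_pow_1[OF w] by simp
  also have "\<dots> = (\<Sum>n\<le>r. of_real (esym_sq (Suc r) n) * (2 * of_real pi) ^ (2 * n) *
      (Polygamma (2 * (r - n) + 1) w + Polygamma (2 * (r - n) + 1) (1 - w)))"
    by (simp only: sum_distrib_left scale)
  finally have "of_real (fact (2 * r + 1) * pi ^ (2 * r + 2) / sin (pi * x) ^ (2 * r + 2)) =
     (of_real (\<Sum>n\<le>r. esym_sq (Suc r) n * (2 * pi) ^ (2 * n) *
        (Polygamma (2 * (r - n) + 1) x + Polygamma (2 * (r - n) + 1) (1 - x))) :: complex)"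
    by (simp add: pg csc_pi_pow_def w_def divide_inverse flip: sin_of_real)
  thus ?thesis by (simp only: of_real_eq_iff)
qed

section \<open>Polygamma values at rational points\<close>

lemma riemann_zeta_has_sum:
  assumes "p \<ge> 2"
  shows "((\<lambda>n. inverse (real n ^ p)) has_sum riemann_zeta (real p)) {1..}"
proof -
  have "summable (\<lambda>n. inverse (real (Suc n) ^ p))"
    using inverse_power_summable[OF assms, where 'a = real] by (subst summable_Suc_iff)
  moreover have "(\<lambda>k. 1 / real (Suc k) powr real p) = (\<lambda>k. inverse (real (Suc k) ^ p))"
    by (simp add: powr_realpow divide_inverse del: of_nat_Suc)
  ultimately have "(\<lambda>n. inverse (real (Suc n) ^ p)) sums riemann_zeta (real p)"
    unfolding riemann_zeta_def by (simp add: summable_sums)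
  hence "((\<lambda>n. inverse (real (Suc n) ^ p)) has_sum riemann_zeta (real p)) UNIV"
    by (rule sums_nonneg_imp_has_sum) simp
  hence "((\<lambda>n. inverse (real n ^ p)) has_sum riemann_zeta (real p)) (range Suc)"
    by (subst has_sum_reindex) (simp_all add: o_def)
  moreover have "range Suc = {1..}"
    by (auto simp: image_iff Suc_le_eq gr0_conv_Suc)
  ultimately show ?thesis by simp
qed

lemma Polygamma_has_sum_progression:
  fixes N r j :: nat
  assumes "0 < r" "0 < N" "0 < j"
  shows "((\<lambda>n. inverse (real n ^ Suc j)) has_sum
     (-1) ^ Suc j * Polygamma j (real r / real N) / (fact j * real N ^ Suc j)) (range (\<lambda>i. r + N * i))"
proof -
  define x where "x = real r / real N"
  have "x \<noteq> 0" using assms by (simp add: x_def)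
  hence "(\<lambda>i. inverse ((x + of_nat i) ^ Suc j)) sums ((-1) ^ Suc j * Polygamma j x / fact j)"
    using Polygamma_LIMSEQ assms(3) by blast
  hence "(\<lambda>i. inverse ((x + of_nat i) ^ Suc j) * inverse (real N ^ Suc j))
      sums ((-1) ^ Suc j * Polygamma j x / fact j * inverse (real N ^ Suc j))"
    by (rule sums_mult2)
  moreover have "inverse ((x + of_nat i) ^ Suc j) * inverse (real N ^ Suc j) = inverse (real (r + N * i) ^ Suc j)" for i
  proof -
    have "(x + of_nat i) * real N = real (r + N * i)" using assms by (simp add: x_def field_simps)
    hence "((x + of_nat i) * real N) ^ Suc j = real (r + N * i) ^ Suc j" by (simp only:)
    thus ?thesis by (metis power_mult_distrib inverse_mult_distrib)
  qed
  ultimately have "((\<lambda>i. inverse (real (r + N * i) ^ Suc j)) has_sum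
      (-1) ^ Suc j * Polygamma j x / (fact j * real N ^ Suc j)) UNIV"
    by (intro sums_nonneg_imp_has_sum) (simp_all add: divide_inverse mult_ac)
  thus ?thesis
    using assms by (subst has_sum_reindex) (auto simp: inj_on_def o_def x_def)
qed

lemma UN_progressions_eq:
  fixes N :: nat
  assumes "0 < N"
  shows "(\<Union>r\<in>{1..N}. range (\<lambda>i. r + N * i)) = {1..}"
proof (intro equalityI subsetI)
  fix n :: nat assume "n \<in> {1..}"
  hence "n = Suc ((n - 1) mod N) + N * ((n - 1) div N)" by simp
  moreover have "Suc ((n - 1) mod N) \<in> {1..N}" using assms by (simp add: Suc_leI)
  ultimately show "n \<in> (\<Union>r\<in>{1..N}. range (\<lambda>i. r + N * i))" by blast
qed auto

lemma progressions_disjoint: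
  fixes N :: nat
  assumes "r \<in> {1..N}" "r' \<in> {1..N}" "r \<noteq> r'"
  shows "range (\<lambda>i. r + N * i) \<inter> range (\<lambda>i. r' + N * i) = {}"
proof -
  have "r mod N \<noteq> r' mod N"
    using assms by (cases "r = N"; cases "r' = N") auto
  hence "r + N * i \<noteq> r' + N * i'" for i i'
    by (metis mod_mult_self2)
  thus ?thesis by blast
qed

lemma sum_Polygamma_fractions:
  fixes N j :: nat
  assumes "0 < N" "0 < j"
  shows "(\<Sum>r=1..N. Polygamma j (real r / real N)) =
     (-1) ^ Suc j * fact j * real N ^ Suc j * riemann_zeta (real (Suc j))"
proof -
  define d :: real where "d = fact j * real N ^ Suc j"
  have "((\<lambda>n. inverse (real n ^ Suc j)) has_sum (\<Sum>r=1..N. (-1) ^ Suc j * Polygamma j (real r / real N) / d))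
      (\<Union>r\<in>{1..N}. range (\<lambda>i. r + N * i))"
    using assms Polygamma_has_sum_progression progressions_disjoint
    by (intro sum_has_sum) (auto simp: d_def)
  hence "(\<Sum>r=1..N. (-1) ^ Suc j * Polygamma j (real r / real N) / d) = riemann_zeta (real (Suc j))"
    unfolding UN_progressions_eq[OF assms(1)]
    using has_sum_unique riemann_zeta_has_sum[of "Suc j"] assms(2) by auto
  moreover have "(\<Sum>r=1..N. (-1) ^ Suc j * Polygamma j (real r / real N) / d) =
      (-1) ^ Suc j / d * (\<Sum>r=1..N. Polygamma j (real r / real N))"
    by (subst sum_distrib_left) (simp add: field_simps)
  ultimately have "(-1) ^ Suc j * fact j * real N ^ Suc j * riemann_zeta (real (Suc j)) =
      ((-1) ^ Suc j * (-1) ^ Suc j) * (d / d) * (\<Sum>r=1..N. Polygamma j (real r / real N))"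
    by (simp add: d_def)
  thus ?thesis using assms(1) by (simp add: d_def minus_one_mult_self)
qed

lemma sum_atLeastAtMost_double_split:
  fixes g :: "nat \<Rightarrow> 'a::comm_monoid_add"
  assumes "1 \<le> M"
  shows "(\<Sum>r=1..2*M. g r) = (\<Sum>k=1..M-1. g k + g (2*M - k)) + g M + g (2*M)"
proof -
  let ?A = "{1..M-1}" and ?B = "(\<lambda>k. 2*M - k) ` {1..M-1}"
  have split: "{1..2*M} = (?A \<union> ?B) \<union> {M, 2*M}"
  proof (intro equalityI subsetI)
    fix r assume "r \<in> {1..2*M}"
    moreover have "r \<in> ?B" if "M < r" "r < 2*M"
      using that by (intro image_eqI[of _ _ "2*M - r"]) auto
    ultimately show "r \<in> (?A \<union> ?B) \<union> {M, 2*M}" by force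
  qed (use assms in auto)
  have inj: "inj_on (\<lambda>k. 2*M - k) ?A" by (auto simp: inj_on_def)
  have "(\<Sum>r=1..2*M. g r) = (\<Sum>r\<in>?A. g r) + (\<Sum>r\<in>?B. g r) + g M + g (2*M)"
  proof -
    have "?A \<inter> ?B = {}" "(?A \<union> ?B) \<inter> {M, 2*M} = {}" "M \<noteq> 2*M"
      using assms by auto
    thus ?thesis unfolding split by (simp add: sum.union_disjoint ac_simps)
  qed
  also have "(\<Sum>r\<in>?B. g r) = (\<Sum>k=1..M-1. g (2*M - k))"
    by (rule sum.reindex[OF inj, unfolded o_def])
  finally show ?thesis by (simp add: sum.distrib)
qed

lemma sum_Polygamma_symmetric_fractions:
  fixes M j :: nat
  assumes M: "1 \<le> M"
  shows "(\<Sum>k=1..M-1. Polygamma (2*j+1) (real k / real (2*M)) + Polygamma (2*j+1) (1 - real k / real (2*M)))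
     = fact (2*j+1) * real (2*M) ^ (2*j+2) * (riemann_zeta (real (2*j+2)) * (1 - 1 / real M ^ (2*j+2)))"
proof -
  define f where "f r = Polygamma (2*j+1) (real r / real (2*M))" for r
  define c where "c = fact (2*j+1) * riemann_zeta (real (2*j+2))"
  have refl: "f (2*M - k) = Polygamma (2*j+1) (1 - real k / real (2*M))" if "k \<in> {1..M-1}" for k
  proof -
    have "real (2*M - k) = real (2*M) - real k" using that by (intro of_nat_diff) auto
    thus ?thesis using M by (simp add: f_def diff_divide_distrib)
  qed
  have "f M + f (2*M) = (\<Sum>r=1..2. Polygamma (2*j+1) (real r / 2))"
    using M by (simp add: f_def numeral_2_eq_2)
  also have "\<dots> = c * 2 ^ (2*j+2)"
    using sum_Polygamma_fractions[of 2 "2*j+1"] by (simp add: c_def)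
  finally have ends: "f M + f (2*M) = c * 2 ^ (2*j+2)" .
  have total: "(\<Sum>r=1..2*M. f r) = c * real (2*M) ^ (2*j+2)"
    using sum_Polygamma_fractions[of "2*M" "2*j+1"] M by (simp add: f_def c_def)
  have "(\<Sum>k=1..M-1. Polygamma (2*j+1) (real k / real (2*M)) + Polygamma (2*j+1) (1 - real k / real (2*M)))
      = (\<Sum>k=1..M-1. f k + f (2*M - k))"
  proof (rule sum.cong)
    fix k assume "k \<in> {1..M-1}"
    thus "Polygamma (2*j+1) (real k / real (2*M)) + Polygamma (2*j+1) (1 - real k / real (2*M))
        = f k + f (2*M - k)"
      by (simp only: refl) (simp only: f_def)
  qed simp
  also have "\<dots> = c * (real (2*M) ^ (2*j+2) - 2 ^ (2*j+2))"
    using sum_atLeastAtMost_double_split[OF M, of f] ends total by (simp add: algebra_simps)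
  also have "\<dots> = c * real (2*M) ^ (2*j+2) * (1 - 1 / real M ^ (2*j+2))"
    using M by (simp add: power_mult_distrib field_simps)
  finally show ?thesis by (simp add: c_def mult_ac)
qed

lemma power_divide_mult_power_diff:
  fixes x a y :: "'a :: field"
  assumes "x \<noteq> 0" "a \<noteq> 0" "n \<le> k"
  shows "(x / a) ^ k / x ^ k * (y ^ n * a ^ (k - n)) = (y / a) ^ n"
proof -
  obtain t where k: "k = n + t" using assms(3) le_Suc_ex by blast
  show ?thesis using assms(1,2) by (simp add: k power_divide power_add field_simps)
qed

lemma gardner_fisher_sin_form:
  "gardner_fisher m v =
     (pi / (2 * real m)) ^ (2 * v) * (\<Sum>k=1..m-1. 1 / sin (pi * (real k / real (2 * m))) ^ (2 * v))"
proof -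
  have "(\<Sum>k=1..m-1. 1 / cos (real k * pi / (2 * real m)) ^ (2 * v)) =
      (\<Sum>k=1..m-1. 1 / sin (pi * (real k / real (2 * m))) ^ (2 * v))"
  proof (rule sum.reindex_bij_witness[of _ "\<lambda>k. m - k" "\<lambda>k. m - k"])
    fix k assume "k \<in> {1..m-1}"
    hence "real (m - k) = real m - real k" by (intro of_nat_diff) auto
    hence "pi * (real (m - k) / real (2 * m)) = pi / 2 - real k * pi / (2 * real m)"
      using \<open>k \<in> {1..m-1}\<close> by (simp add: field_simps)
    thus "1 / sin (pi * (real (m - k) / real (2 * m))) ^ (2 * v) = 1 / cos (real k * pi / (2 * real m)) ^ (2 * v)"
      by (simp add: sin_diff)
  qed auto
  thus ?thesis unfolding gardner_fisher_def by simp
qed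

lemma sum_inverse_sin_pow_fractions:
  assumes m: "1 \<le> m"
  shows "fact (2 * r + 1) * pi ^ (2 * r + 2) *
      (\<Sum>k=1..m-1. 1 / sin (pi * (real k / real (2 * m))) ^ (2 * r + 2)) =
    (\<Sum>n\<le>r. esym_sq (Suc r) n * (2 * pi) ^ (2 * n) *
      (fact (2 * (r - n) + 1) * real (2 * m) ^ (2 * (r - n) + 2) *
        (riemann_zeta (real (2 * (r - n) + 2)) * (1 - 1 / real m ^ (2 * (r - n) + 2)))))"
proof -
  define P where "P n x = Polygamma (2 * (r - n) + 1) x + Polygamma (2 * (r - n) + 1) (1 - x)" for n and x :: real
  have "fact (2 * r + 1) * pi ^ (2 * r + 2) *
      (\<Sum>k=1..m-1. 1 / sin (pi * (real k / real (2 * m))) ^ (2 * r + 2)) =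
    (\<Sum>k=1..m-1. \<Sum>n\<le>r. esym_sq (Suc r) n * (2 * pi) ^ (2 * n) * P n (real k / real (2 * m)))"
    unfolding sum_distrib_left
  proof (rule sum.cong)
    fix k assume "k \<in> {1..m-1}"
    hence "0 < real k / real (2 * m)" "real k / real (2 * m) < 1" by (auto simp: field_simps)
    from inverse_sin_pow_Polygamma_expansion[OF this, of r] show "fact (2 * r + 1) * pi ^ (2 * r + 2) * (1 / sin (pi * (real k / real (2 * m))) ^ (2 * r + 2)) =
        (\<Sum>n\<le>r. esym_sq (Suc r) n * (2 * pi) ^ (2 * n) * P n (real k / real (2 * m)))"
      by (simp add: P_def)
  qed simp
  also have "\<dots> = (\<Sum>n\<le>r. esym_sq (Suc r) n * (2 * pi) ^ (2 * n) * (\<Sum>k=1..m-1. P n (real k / real (2 * m))))"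
    by (subst sum.swap) (simp add: sum_distrib_left)
  finally show ?thesis
    using sum_Polygamma_symmetric_fractions[OF m] by (simp add: P_def)
qed

lemma gardner_fisher_Suc:
  assumes m: "1 \<le> m"
  shows "gardner_fisher m (Suc r) = 1 / fact (2 * r + 1) *
    (\<Sum>n\<le>r. (pi / real m) ^ (2 * n) * esym_sq (Suc r) n * fact (2 * (r - n) + 1) *
      (riemann_zeta (real (2 * (r - n) + 2)) * (1 - 1 / real m ^ (2 * (r - n) + 2))))"
proof -
  let ?c = "(pi / (2 * real m)) ^ (2 * r + 2) / pi ^ (2 * r + 2)"
  have coeff: "?c * ((2 * pi) ^ (2 * n) * real (2 * m) ^ (2 * (r - n) + 2)) = (pi / real m) ^ (2 * n)"
    if "n \<le> r" for n
    using power_divide_mult_power_diff[of pi "2 * real m" "2 * n" "2 * r + 2" "2 * pi"] that m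
    by (simp add: Suc_diff_le diff_mult_distrib2)
  have scale: "?c * (s * (2 * pi) ^ (2 * n) * (f * real (2 * m) ^ (2 * (r - n) + 2) * z)) =
      (pi / real m) ^ (2 * n) * s * f * z" if "n \<le> r" for n and s f z :: real
  proof -
    have "?c * (s * (2 * pi) ^ (2 * n) * (f * real (2 * m) ^ (2 * (r - n) + 2) * z)) =
        (?c * ((2 * pi) ^ (2 * n) * real (2 * m) ^ (2 * (r - n) + 2))) * s * f * z"
      by (simp only: mult_ac)
    thus ?thesis by (simp only: coeff[OF that])
  qed
  have "gardner_fisher m (Suc r) = 1 / fact (2 * r + 1) * (?c * (fact (2 * r + 1) * pi ^ (2 * r + 2) *
      (\<Sum>k=1..m-1. 1 / sin (pi * (real k / real (2 * m))) ^ (2 * r + 2))))"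
    by (simp add: gardner_fisher_sin_form)
  also have "\<dots> = 1 / fact (2 * r + 1) * (\<Sum>n\<le>r. ?c * (esym_sq (Suc r) n * (2 * pi) ^ (2 * n) *
      (fact (2 * (r - n) + 1) * real (2 * m) ^ (2 * (r - n) + 2) *
        (riemann_zeta (real (2 * (r - n) + 2)) * (1 - 1 / real m ^ (2 * (r - n) + 2))))))"
    unfolding sum_inverse_sin_pow_fractions[OF m] by (simp only: sum_distrib_left[of ?c])
  also have "\<dots> = 1 / fact (2 * r + 1) *
    (\<Sum>n\<le>r. (pi / real m) ^ (2 * n) * esym_sq (Suc r) n * fact (2 * (r - n) + 1) *
      (riemann_zeta (real (2 * (r - n) + 2)) * (1 - 1 / real m ^ (2 * (r - n) + 2))))"
    by (intro arg_cong[where f = "(*) (1 / fact (2 * r + 1))"] sum.cong refl scale) simp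
  finally show ?thesis .
qed

theorem mainTheorem3:
  fixes m v :: nat
  assumes "m \<ge> 1" and "v \<ge> 1"
  shows "gardner_fisher m v =
    1 / fact (2 * v - 1) *
    (\<Sum>n = 0..v - 1. (pi / real m) ^ (2 * n) * esym_sq v n *
        Gamma (real (2 * v - 2 * n)) * riemann_zeta (real (2 * v - 2 * n)) *
        (1 - 1 / real m ^ (2 * v - 2 * n)))"
proof -
  obtain r where v: "v = Suc r" using assms(2) by (cases v) auto
  have "(\<Sum>n\<le>r. (pi / real m) ^ (2 * n) * esym_sq (Suc r) n * fact (2 * (r - n) + 1) *
      (riemann_zeta (real (2 * (r - n) + 2)) * (1 - 1 / real m ^ (2 * (r - n) + 2)))) =
    (\<Sum>n = 0..v - 1. (pi / real m) ^ (2 * n) * esym_sq v n *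
        Gamma (real (2 * v - 2 * n)) * riemann_zeta (real (2 * v - 2 * n)) *
        (1 - 1 / real m ^ (2 * v - 2 * n)))"
    unfolding v diff_Suc_1 atLeast0AtMost
  proof (rule sum.cong)
    fix n assume "n \<in> {..r}"
    hence "2 * Suc r - 2 * n = 2 * (r - n) + 2" by simp
    moreover have "Gamma (real (2 * (r - n) + 2)) = fact (2 * (r - n) + 1)"
      using Gamma_fact[of "2 * (r - n) + 1", where 'a = real] by (simp add: add.commute)
    ultimately show "(pi / real m) ^ (2 * n) * esym_sq (Suc r) n * fact (2 * (r - n) + 1) *
        (riemann_zeta (real (2 * (r - n) + 2)) * (1 - 1 / real m ^ (2 * (r - n) + 2))) =
      (pi / real m) ^ (2 * n) * esym_sq (Suc r) n * Gamma (real (2 * Suc r - 2 * n)) *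
        riemann_zeta (real (2 * Suc r - 2 * n)) * (1 - 1 / real m ^ (2 * Suc r - 2 * n))"
      by (simp only: mult.assoc)
  qed simp
  thus ?thesis using gardner_fisher_Suc[OF assms(1), of r] by (simp add: v)
qed

end
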